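(* Let $D,D'$ be minimal abstract storage devices. Then $D\equiv D'$ if and only if there exist bijections $\phi:\mathcal{S}_D\to\mathcal{S}_{D'}$ and $\alpha:\mathcal{P}_D\to\mathcal{P}_{D'}$ such that $\pi=\alpha(\pi)\circ\phi$ for all $\pi\in\mathcal{P}_D$ (equivalently, $\pi'=\alpha^{-1}(\pi')\circ\phi^{-1}$ for all $\pi'\in\mathcal{P}_{D'}$).
   Context: An abstract storage device (ASD) is a pair $D=(\mathcal{S}_D,\mathcal{P}_D)$, $\mathcal{S}_D$ a finite set and $\mathcal{P}_D$ a finite family of partitions of $\mathcal{S}_D$. For a partition $\pi$ of $\mathcal{S}'$ and $\phi:\mathcal{S}\to\mathcal{S}'$, $\pi\circ\phi$ is the partition of $\mathcal{S}$ with $x,y$ in the same block iff $\phi(x),\phi(y)$ are in the same block of $\pi$; $\pi\preceq\rho$ means every block of $\pi$ lies in a block of $\rho$. $D\le D'$ means there exist $\phi:\mathcal{S}_D\to\mathcal{S}_{D'}$, $\alpha:\mathcal{P}_D\to\mathcal{P}_{D'}$ with $\alpha(\pi)\circ\phi\preceq\pi$ for all $\pi\in\mathcal{P}_D$; $D\equiv D'$ means $D\le D'$ and $D'\le D$. $D$ is minimal if there is no $E\equiv D$ with $|\mathcal{S}_E|<|\mathcal{S}_D|$ and no $E\equiv D$ with $|\mathcal{P}_E|<|\mathcal{P}_D|$. *)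

theory Defs
  imports "HOL-Library.Disjoint_Sets"
begin

type_synonym 'a asd = "'a set \<times> 'a set set set"

definition states :: "'a asd \<Rightarrow> 'a set" where "states D = fst D"
definition parts :: "'a asd \<Rightarrow> 'a set set set" where "parts D = snd D"

definition is_asd :: "'a asd \<Rightarrow> bool" where
  "is_asd D \<longleftrightarrow> finite (states D) \<and> finite (parts D) \<and>
     (\<forall>\<pi>\<in>parts D. partition_on (states D) \<pi>)"

text \<open>Pullback pi o phi of a partition pi (of the codomain) along phi : S -> S':
x, y in the same block iff phi x, phi y in the same block of pi.\<close>
definition pullback :: "'a set \<Rightarrow> ('a \<Rightarrow> 'b) \<Rightarrow> 'b set set \<Rightarrow> 'a set set" where
  "pullback S \<phi> \<pi> = ((\<lambda>B. {x\<in>S. \<phi> x \<in> B}) ` \<pi>) - {{}}"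

definition refines :: "'a set set \<Rightarrow> 'a set set \<Rightarrow> bool" where
  "refines \<pi> \<rho> \<longleftrightarrow> (\<forall>B\<in>\<pi>. \<exists>C\<in>\<rho>. B \<subseteq> C)"

definition asd_le :: "'a asd \<Rightarrow> 'b asd \<Rightarrow> bool" where
  "asd_le D D' \<longleftrightarrow> (\<exists>\<phi> \<alpha>. \<phi> ` states D \<subseteq> states D' \<and> \<alpha> ` parts D \<subseteq> parts D' \<and>
      (\<forall>\<pi>\<in>parts D. refines (pullback (states D) \<phi> (\<alpha> \<pi>)) \<pi>))"

definition asd_equiv :: "'a asd \<Rightarrow> 'b asd \<Rightarrow> bool" where
  "asd_equiv D D' \<longleftrightarrow> asd_le D D' \<and> asd_le D' D"

text \<open>Minimality: quantification over all ASDs E is rendered by ASDs with states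
in nat; every finite ASD is isomorphic (hence equivalent, with equal sizes) to one
over nat, so this loses nothing.\<close>
definition asd_minimal :: "'a asd \<Rightarrow> bool" where
  "asd_minimal D \<longleftrightarrow>
     \<not> (\<exists>E :: nat asd. is_asd E \<and> asd_equiv E D \<and> card (states E) < card (states D)) \<and>
     \<not> (\<exists>E :: nat asd. is_asd E \<and> asd_equiv E D \<and> card (parts E) < card (parts D))"

end

theory Submission
  imports Defs
begin

text \<open>If \<open>D \<le> D'\<close> via \<open>(\<phi>, \<alpha>)\<close> and \<open>D' \<le> D\<close>, then the image \<open>\<phi>(S\<^sub>D)\<close>, carrying the
restrictions of the partitions \<open>\<alpha>(\<pi>)\<close>, is a device equivalent to \<open>D\<close>; for minimal \<open>D\<close> its
size forces \<open>\<phi>\<close> and \<open>\<alpha>\<close> to be injective, so for two minimal devices both are bijections.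
Pulling back along a bijection preserves the number of blocks, and a refinement has at least as
many blocks as the partition it refines, hence \<open>|\<pi>| \<le> |\<alpha>(\<pi>)|\<close>. Summing over the bijection
\<open>\<alpha>\<close> and comparing with the reduction \<open>D' \<le> D\<close> gives equality for every \<open>\<pi>\<close>, and a refinement
with as many blocks as the partition it refines is that partition.\<close>

lemma mem_pullbackE:
  assumes "X \<in> pullback S \<phi> \<sigma>"
  obtains B where "B \<in> \<sigma>" "X = {x\<in>S. \<phi> x \<in> B}" "X \<noteq> {}"
  using assms unfolding pullback_def by blast

lemma mem_pullbackI:
  assumes "B \<in> \<sigma>" "{x\<in>S. \<phi> x \<in> B} \<noteq> {}"
  shows "{x\<in>S. \<phi> x \<in> B} \<in> pullback S \<phi> \<sigma>"
  using assms unfolding pullback_def by blast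

lemma pullback_comp:
  assumes "\<phi> ` S \<subseteq> T"
  shows "pullback S \<phi> (pullback T \<psi> \<sigma>) = pullback S (\<psi> \<circ> \<phi>) \<sigma>"
proof -
  have restrict: "{x\<in>S. \<phi> x \<in> {y\<in>T. \<psi> y \<in> B}} = {x\<in>S. (\<psi> \<circ> \<phi>) x \<in> B}" for B
    using assms by auto
  show ?thesis
  proof (rule set_eqI, rule iffI)
    fix X assume "X \<in> pullback S \<phi> (pullback T \<psi> \<sigma>)"
    then obtain C where C: "C \<in> pullback T \<psi> \<sigma>" "X = {x\<in>S. \<phi> x \<in> C}" "X \<noteq> {}"
      by (rule mem_pullbackE)
    from C(1) obtain B where B: "B \<in> \<sigma>" "C = {y\<in>T. \<psi> y \<in> B}"
      by (rule mem_pullbackE)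
    have X: "X = {x\<in>S. (\<psi> \<circ> \<phi>) x \<in> B}"
      unfolding C(2) B(2) restrict ..
    show "X \<in> pullback S (\<psi> \<circ> \<phi>) \<sigma>"
      unfolding X by (rule mem_pullbackI[OF B(1)]) (use C(3) X in simp)
  next
    fix X assume "X \<in> pullback S (\<psi> \<circ> \<phi>) \<sigma>"
    then obtain B where B: "B \<in> \<sigma>" "X = {x\<in>S. (\<psi> \<circ> \<phi>) x \<in> B}" "X \<noteq> {}"
      by (rule mem_pullbackE)
    then have C: "{y\<in>T. \<psi> y \<in> B} \<in> pullback T \<psi> \<sigma>"
      using assms by (intro mem_pullbackI) auto
    show "X \<in> pullback S \<phi> (pullback T \<psi> \<sigma>)"
      unfolding B(2) restrict[symmetric] by (rule mem_pullbackI[OF C]) (use B restrict in simp)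
  qed
qed

lemma pullback_cong:
  assumes "\<And>x. x \<in> S \<Longrightarrow> \<phi> x = \<psi> x"
  shows "pullback S \<phi> \<sigma> = pullback S \<psi> \<sigma>"
  using assms unfolding pullback_def by (metis (mono_tags, lifting) Collect_cong)

lemma partition_on_pullback:
  assumes "partition_on T \<sigma>" "\<phi> ` S \<subseteq> T"
  shows "partition_on S (pullback S \<phi> \<sigma>)"
proof -
  have "partition_on ((\<lambda>B. {x\<in>S. \<phi> x \<in> B}) T) ((\<lambda>B. {x\<in>S. \<phi> x \<in> B}) ` \<sigma> - {{}})"
    by (rule partition_on_transform[OF assms(1)]) (auto simp: disjnt_def)
  moreover have "{x\<in>S. \<phi> x \<in> T} = S"
    using assms(2) by auto
  ultimately show ?thesis
    unfolding pullback_def by simp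
qed

lemma card_pullback_bij:
  assumes "bij_betw \<phi> S T" "partition_on T \<sigma>"
  shows "card (pullback S \<phi> \<sigma>) = card \<sigma>"
proof -
  let ?pre = "\<lambda>B. {x\<in>S. \<phi> x \<in> B}"
  have image_pre: "\<phi> ` ?pre B = B" if "B \<in> \<sigma>" for B
  proof -
    have "B \<subseteq> \<phi> ` S"
      using that partition_onD1[OF assms(2)] assms(1) unfolding bij_betw_def by auto
    then show ?thesis by auto
  qed
  have "?pre B \<noteq> {}" if "B \<in> \<sigma>" for B
    using image_pre[OF that] partition_onD3[OF assms(2)] that by (metis image_empty)
  then have "pullback S \<phi> \<sigma> = ?pre ` \<sigma>"
    unfolding pullback_def by auto
  moreover have "inj_on ?pre \<sigma>"
    by (rule inj_onI) (metis image_pre)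
  ultimately show ?thesis
    by (simp add: card_image)
qed

lemma partition_on_block_unique:
  assumes "partition_on S \<pi>" "C \<in> \<pi>" "C' \<in> \<pi>" "x \<in> C" "x \<in> C'"
  shows "C = C'"
  using partition_onD2[OF assms(1)] assms(2-5) by (auto simp: pairwise_def disjnt_def)

lemma refines_obtain_coarsening:
  assumes \<rho>: "partition_on S \<rho>" and \<pi>: "partition_on S \<pi>" and "refines \<rho> \<pi>"
  obtains u where "u ` \<rho> = \<pi>" "\<And>B. B \<in> \<rho> \<Longrightarrow> B \<subseteq> u B"
proof -
  define u where "u B = (SOME C. C \<in> \<pi> \<and> B \<subseteq> C)" for B
  have u: "u B \<in> \<pi> \<and> B \<subseteq> u B" if "B \<in> \<rho>" for B
    unfolding u_def by (rule someI_ex) (use assms(3) that in \<open>auto simp: refines_def\<close>)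
  have "C \<in> u ` \<rho>" if C: "C \<in> \<pi>" for C
  proof -
    obtain x where "x \<in> C"
      using partition_onD3[OF \<pi>] C by (metis ex_in_conv)
    moreover from this have "x \<in> S"
      using partition_onD1[OF \<pi>] C by blast
    then obtain B where B: "B \<in> \<rho>" "x \<in> B"
      using partition_onD1[OF \<rho>] by blast
    ultimately have "u B = C"
      using partition_on_block_unique[OF \<pi>] u[OF B(1)] C by blast
    with B(1) show ?thesis by blast
  qed
  with u have "u ` \<rho> = \<pi>" by blast
  then show ?thesis
    using u that by blast
qed

lemma refines_card_le:
  assumes "finite S" "partition_on S \<rho>" "partition_on S \<pi>" "refines \<rho> \<pi>"
  shows "card \<pi> \<le> card \<rho>"
proof -
  obtain u where "u ` \<rho> = \<pi>"
    by (rule refines_obtain_coarsening[OF assms(2-4)])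
  then show ?thesis
    using card_image_le[OF finite_elements[OF assms(1,2)]] by blast
qed

lemma refines_card_eq_imp_eq:
  assumes "finite S" and \<rho>: "partition_on S \<rho>" and \<pi>: "partition_on S \<pi>"
    and "refines \<rho> \<pi>" "card \<pi> = card \<rho>"
  shows "\<rho> = \<pi>"
proof -
  obtain u where u\<rho>: "u ` \<rho> = \<pi>" and sub: "\<And>B. B \<in> \<rho> \<Longrightarrow> B \<subseteq> u B"
    using refines_obtain_coarsening[OF \<rho> \<pi> assms(4)] by blast
  have "inj_on u \<rho>"
    using inj_on_iff_eq_card finite_elements[OF assms(1) \<rho>] u\<rho> assms(5) by metis
  have "u B = B" if B: "B \<in> \<rho>" for B
  proof
    show "u B \<subseteq> B"
    proof
      fix x assume x: "x \<in> u B"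
      then have "x \<in> S"
        using partition_onD1[OF \<pi>] u\<rho> B by blast
      then obtain B' where B': "B' \<in> \<rho>" "x \<in> B'"
        using partition_onD1[OF \<rho>] by blast
      then have "u B' = u B"
        using partition_on_block_unique[OF \<pi>] u\<rho> sub B x by blast
      with \<open>inj_on u \<rho>\<close> B B' show "x \<in> B"
        by (metis inj_onD)
    qed
  qed (rule sub[OF B])
  then show ?thesis
    using u\<rho> by simp
qed

lemma refines_refl: "refines \<pi> \<pi>"
  unfolding refines_def by auto

lemma refines_trans: "refines \<pi> \<rho> \<Longrightarrow> refines \<rho> \<sigma> \<Longrightarrow> refines \<pi> \<sigma>"
  unfolding refines_def by (meson order_trans)

lemma refines_pullback_id: "refines (pullback S id \<sigma>) \<sigma>"
  unfolding refines_def
proof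
  fix X assume "X \<in> pullback S id \<sigma>"
  then obtain B where "B \<in> \<sigma>" "X = {x\<in>S. id x \<in> B}"
    by (rule mem_pullbackE)
  then show "\<exists>C\<in>\<sigma>. X \<subseteq> C" by auto
qed

lemma refines_pullback_mono:
  assumes "refines \<rho> \<sigma>"
  shows "refines (pullback S \<phi> \<rho>) (pullback S \<phi> \<sigma>)"
  unfolding refines_def
proof
  fix X assume "X \<in> pullback S \<phi> \<rho>"
  then obtain B where B: "B \<in> \<rho>" "X = {x\<in>S. \<phi> x \<in> B}" "X \<noteq> {}"
    by (rule mem_pullbackE)
  then obtain C where "C \<in> \<sigma>" "B \<subseteq> C"
    using assms unfolding refines_def by blast
  with B have "X \<subseteq> {x\<in>S. \<phi> x \<in> C}"
    by auto
  moreover from \<open>C \<in> \<sigma>\<close> have "{x\<in>S. \<phi> x \<in> C} \<in> pullback S \<phi> \<sigma>"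
    using B(3) calculation by (intro mem_pullbackI) auto
  ultimately show "\<exists>C\<in>pullback S \<phi> \<sigma>. X \<subseteq> C" by blast
qed

definition reduction :: "('a \<Rightarrow> 'b) \<Rightarrow> ('a set set \<Rightarrow> 'b set set) \<Rightarrow> 'a asd \<Rightarrow> 'b asd \<Rightarrow> bool" where
  "reduction \<phi> \<alpha> D D' \<longleftrightarrow> \<phi> ` states D \<subseteq> states D' \<and> \<alpha> ` parts D \<subseteq> parts D' \<and>
     (\<forall>\<pi>\<in>parts D. refines (pullback (states D) \<phi> (\<alpha> \<pi>)) \<pi>)"

lemma asd_le_iff_reduction: "asd_le D D' \<longleftrightarrow> (\<exists>\<phi> \<alpha>. reduction \<phi> \<alpha> D D')"
  unfolding asd_le_def reduction_def ..

lemma reduction_comp: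
  assumes "reduction \<phi> \<alpha> D D'" "reduction \<psi> \<beta> D' D''"
  shows "reduction (\<psi> \<circ> \<phi>) (\<beta> \<circ> \<alpha>) D D''"
  unfolding reduction_def
proof (intro conjI ballI)
  show "(\<psi> \<circ> \<phi>) ` states D \<subseteq> states D''" "(\<beta> \<circ> \<alpha>) ` parts D \<subseteq> parts D''"
    using assms unfolding reduction_def by (auto simp: image_subset_iff)
next
  fix \<pi> assume \<pi>: "\<pi> \<in> parts D"
  have \<phi>: "\<phi> ` states D \<subseteq> states D'" and \<alpha>\<pi>: "\<alpha> \<pi> \<in> parts D'"
    using assms(1) \<pi> unfolding reduction_def by auto
  have "refines (pullback (states D') \<psi> (\<beta> (\<alpha> \<pi>))) (\<alpha> \<pi>)"
    using assms(2) \<alpha>\<pi> unfolding reduction_def by blast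
  then have "refines (pullback (states D) (\<psi> \<circ> \<phi>) (\<beta> (\<alpha> \<pi>))) (pullback (states D) \<phi> (\<alpha> \<pi>))"
    unfolding pullback_comp[OF \<phi>, symmetric] by (rule refines_pullback_mono)
  moreover have "refines (pullback (states D) \<phi> (\<alpha> \<pi>)) \<pi>"
    using assms(1) \<pi> unfolding reduction_def by blast
  ultimately show "refines (pullback (states D) (\<psi> \<circ> \<phi>) ((\<beta> \<circ> \<alpha>) \<pi>)) \<pi>"
    unfolding comp_apply by (rule refines_trans)
qed

lemma asd_le_trans: "asd_le D D' \<Longrightarrow> asd_le D' D'' \<Longrightarrow> asd_le D D''"
  unfolding asd_le_iff_reduction by (blast intro: reduction_comp)

lemma asd_equiv_sym: "asd_equiv D D' \<Longrightarrow> asd_equiv D' D"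
  unfolding asd_equiv_def by blast

lemma asd_equiv_trans: "asd_equiv D D' \<Longrightarrow> asd_equiv D' D'' \<Longrightarrow> asd_equiv D D''"
  unfolding asd_equiv_def by (blast intro: asd_le_trans)

definition asd_iso :: "('a \<Rightarrow> 'b) \<Rightarrow> ('a set set \<Rightarrow> 'b set set) \<Rightarrow> 'a asd \<Rightarrow> 'b asd \<Rightarrow> bool" where
  "asd_iso \<phi> \<alpha> D D' \<longleftrightarrow> bij_betw \<phi> (states D) (states D') \<and> bij_betw \<alpha> (parts D) (parts D') \<and>
     (\<forall>\<pi>\<in>parts D. \<pi> = pullback (states D) \<phi> (\<alpha> \<pi>))"

lemma asd_iso_imp_reduction: "asd_iso \<phi> \<alpha> D D' \<Longrightarrow> reduction \<phi> \<alpha> D D'"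
  unfolding asd_iso_def reduction_def bij_betw_def by (metis refines_refl order_refl)

lemma asd_iso_imp_reduction_inv:
  assumes "asd_iso \<phi> \<alpha> D D'"
  shows "reduction (inv_into (states D) \<phi>) (inv_into (parts D) \<alpha>) D' D"
  unfolding reduction_def
proof (intro conjI ballI)
  have \<phi>: "bij_betw \<phi> (states D) (states D')" and \<alpha>: "bij_betw \<alpha> (parts D) (parts D')"
    using assms unfolding asd_iso_def by auto
  then show \<phi>': "inv_into (states D) \<phi> ` states D' \<subseteq> states D"
    and "inv_into (parts D) \<alpha> ` parts D' \<subseteq> parts D"
    by (auto simp: bij_betw_def intro: inv_into_into)
  fix \<pi>' assume \<pi>': "\<pi>' \<in> parts D'"
  have "pullback (states D') (inv_into (states D) \<phi>) (inv_into (parts D) \<alpha> \<pi>')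
      = pullback (states D') (inv_into (states D) \<phi>) (pullback (states D) \<phi> \<pi>')"
    using assms \<alpha> \<pi>' unfolding asd_iso_def bij_betw_def
    by (metis f_inv_into_f inv_into_into)
  also have "\<dots> = pullback (states D') (\<phi> \<circ> inv_into (states D) \<phi>) \<pi>'"
    by (rule pullback_comp[OF \<phi>'])
  also have "\<dots> = pullback (states D') id \<pi>'"
    using \<phi> by (intro pullback_cong) (auto simp: bij_betw_def f_inv_into_f)
  finally show "refines (pullback (states D') (inv_into (states D) \<phi>) (inv_into (parts D) \<alpha> \<pi>')) \<pi>'"
    using refines_pullback_id by metis
qed

lemma asd_iso_imp_equiv: "asd_iso \<phi> \<alpha> D D' \<Longrightarrow> asd_equiv D D'"
  unfolding asd_equiv_def asd_le_iff_reduction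
  using asd_iso_imp_reduction asd_iso_imp_reduction_inv by blast

definition asd_image :: "('a \<Rightarrow> 'b) \<Rightarrow> 'a asd \<Rightarrow> 'b asd" where
  "asd_image g D = (g ` states D, (\<lambda>\<pi>. (`) g ` \<pi>) ` parts D)"

lemma
  shows states_asd_image: "states (asd_image g D) = g ` states D"
    and parts_asd_image: "parts (asd_image g D) = (\<lambda>\<pi>. (`) g ` \<pi>) ` parts D"
  unfolding asd_image_def states_def parts_def by simp_all

lemma is_asd_image:
  assumes "is_asd D" "inj_on g (states D)"
  shows "is_asd (asd_image g D)"
proof -
  have "partition_on (g ` states D) ((`) g ` \<pi>)" if "\<pi> \<in> parts D" for \<pi>
  proof -
    have \<pi>: "partition_on (states D) \<pi>"
      using assms(1) that unfolding is_asd_def by blast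
    have "(`) g ` \<pi> - {{}} = (`) g ` \<pi>"
      using partition_onD3[OF \<pi>] by auto
    then show ?thesis
      using partition_on_inj_image[OF \<pi> assms(2)] by simp
  qed
  then show ?thesis
    using assms(1) unfolding is_asd_def states_asd_image parts_asd_image by blast
qed

lemma asd_iso_image:
  assumes "is_asd D" "inj_on g (states D)"
  shows "asd_iso g (\<lambda>\<pi>. (`) g ` \<pi>) D (asd_image g D)"
  unfolding asd_iso_def states_asd_image parts_asd_image
proof (intro conjI ballI)
  have parts_Pow: "parts D \<subseteq> Pow (Pow (states D))"
    using assms(1) unfolding is_asd_def partition_on_def by blast
  show "bij_betw g (states D) (g ` states D)"
    using assms(2) by (rule inj_on_imp_bij_betw)
  have "inj_on ((`) ((`) g)) (Pow (Pow (states D)))"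
    by (intro inj_on_image_Pow assms(2))
  then show "bij_betw (\<lambda>\<pi>. (`) g ` \<pi>) (parts D) ((\<lambda>\<pi>. (`) g ` \<pi>) ` parts D)"
    using parts_Pow by (auto intro: inj_on_imp_bij_betw inj_on_subset)
  fix \<pi> assume "\<pi> \<in> parts D"
  then have \<pi>: "partition_on (states D) \<pi>"
    using assms(1) unfolding is_asd_def by blast
  have "{x\<in>states D. g x \<in> g ` B} = B" if "B \<in> \<pi>" for B
    using that partition_onD1[OF \<pi>] inj_on_image_mem_iff[OF assms(2)] by blast
  then show "\<pi> = pullback (states D) g ((`) g ` \<pi>)"
    using partition_onD3[OF \<pi>] unfolding pullback_def by (auto simp: image_image)
qed

text \<open>Minimality only compares with devices whose states are natural numbers, so \<open>E\<close> is
first transported to \<open>nat\<close>.\<close>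

lemma asd_minimal_card_le:
  fixes E :: "'b asd" and D :: "'a asd"
  assumes "is_asd E" "asd_equiv E D" "asd_minimal D"
  shows "card (states D) \<le> card (states E)" "card (parts D) \<le> card (parts E)"
proof -
  obtain g :: "'b \<Rightarrow> nat" where g: "inj_on g (states E)"
    using assms(1) finite_imp_inj_to_nat_seg unfolding is_asd_def by blast
  let ?E = "asd_image g E"
  have iso: "asd_iso g (\<lambda>\<pi>. (`) g ` \<pi>) E ?E"
    by (rule asd_iso_image[OF assms(1) g])
  then have "asd_equiv ?E D"
    using asd_equiv_trans[OF asd_equiv_sym[OF asd_iso_imp_equiv] assms(2)] by blast
  moreover have "is_asd ?E"
    by (rule is_asd_image[OF assms(1) g])
  moreover have card_E: "card (states ?E) = card (states E)" "card (parts ?E) = card (parts E)"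
    using iso unfolding asd_iso_def by (metis bij_betw_same_card)+
  ultimately have "\<not> card (states ?E) < card (states D)" "\<not> card (parts ?E) < card (parts D)"
    using assms(3) unfolding asd_minimal_def by blast+
  then show "card (states D) \<le> card (states E)" "card (parts D) \<le> card (parts E)"
    using card_E by simp_all
qed

text \<open>\<open>pullback T id \<sigma>\<close> is the restriction of \<open>\<sigma>\<close> to \<open>T\<close>.\<close>

definition reduction_image :: "('a \<Rightarrow> 'b) \<Rightarrow> ('a set set \<Rightarrow> 'b set set) \<Rightarrow> 'a asd \<Rightarrow> 'b asd" where
  "reduction_image \<phi> \<alpha> D = (\<phi> ` states D, pullback (\<phi> ` states D) id ` \<alpha> ` parts D)"

lemma
  shows states_reduction_image: "states (reduction_image \<phi> \<alpha> D) = \<phi> ` states D"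
    and parts_reduction_image:
      "parts (reduction_image \<phi> \<alpha> D) = pullback (\<phi> ` states D) id ` \<alpha> ` parts D"
  unfolding reduction_image_def states_def parts_def by simp_all

lemma is_asd_reduction_image:
  assumes "is_asd D" "is_asd D'" "reduction \<phi> \<alpha> D D'"
  shows "is_asd (reduction_image \<phi> \<alpha> D)"
proof -
  have "partition_on (\<phi> ` states D) (pullback (\<phi> ` states D) id \<sigma>)" if "\<sigma> \<in> \<alpha> ` parts D" for \<sigma>
    using assms(2,3) that unfolding is_asd_def reduction_def
    by (intro partition_on_pullback) auto
  then show ?thesis
    using assms(1) unfolding is_asd_def states_reduction_image parts_reduction_image by blast
qed

lemma reduction_to_reduction_image:
  assumes "reduction \<phi> \<alpha> D D'"
  shows "reduction \<phi> (pullback (\<phi> ` states D) id \<circ> \<alpha>) D (reduction_image \<phi> \<alpha> D)"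
proof -
  have "pullback (states D) \<phi> (pullback (\<phi> ` states D) id \<sigma>) = pullback (states D) \<phi> \<sigma>" for \<sigma>
    by (simp add: pullback_comp)
  then show ?thesis
    using assms unfolding reduction_def states_reduction_image parts_reduction_image by auto
qed

lemma reduction_from_reduction_image:
  assumes "reduction \<phi> \<alpha> D D'"
  shows "reduction id (inv_into (\<alpha> ` parts D) (pullback (\<phi> ` states D) id))
    (reduction_image \<phi> \<alpha> D) D'"
  unfolding reduction_def states_reduction_image parts_reduction_image
proof (intro conjI ballI)
  show "id ` \<phi> ` states D \<subseteq> states D'" "inv_into (\<alpha> ` parts D) (pullback (\<phi> ` states D) id) `
      pullback (\<phi> ` states D) id ` \<alpha> ` parts D \<subseteq> parts D'"
    using assms unfolding reduction_def by (auto intro: inv_into_into[THEN rev_subsetD])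
next
  fix \<rho> assume "\<rho> \<in> pullback (\<phi> ` states D) id ` \<alpha> ` parts D"
  then have "pullback (\<phi> ` states D) id (inv_into (\<alpha> ` parts D) (pullback (\<phi> ` states D) id) \<rho>) = \<rho>"
    by (rule f_inv_into_f)
  then show "refines (pullback (\<phi> ` states D) id
      (inv_into (\<alpha> ` parts D) (pullback (\<phi> ` states D) id) \<rho>)) \<rho>"
    by (simp add: refines_refl)
qed

lemma minimal_reduction_inj:
  assumes "is_asd D" "is_asd D'" "asd_minimal D" "reduction \<phi> \<alpha> D D'" "asd_le D' D"
  shows "inj_on \<phi> (states D)" "inj_on \<alpha> (parts D)"
proof -
  let ?E = "reduction_image \<phi> \<alpha> D"
  have "asd_le D ?E"
    using reduction_to_reduction_image[OF assms(4)] unfolding asd_le_iff_reduction by blast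
  moreover have "asd_le ?E D'"
    using reduction_from_reduction_image[OF assms(4)] unfolding asd_le_iff_reduction by blast
  ultimately have "asd_equiv ?E D"
    using asd_le_trans[OF _ assms(5)] unfolding asd_equiv_def by blast
  then have S: "card (states D) \<le> card (\<phi> ` states D)"
    and P: "card (parts D) \<le> card (pullback (\<phi> ` states D) id ` \<alpha> ` parts D)"
    using asd_minimal_card_le[OF is_asd_reduction_image[OF assms(1,2,4)] _ assms(3)]
    unfolding states_reduction_image parts_reduction_image by blast+
  have fin: "finite (states D)" "finite (parts D)"
    using assms(1) unfolding is_asd_def by blast+
  show "inj_on \<phi> (states D)"
    using S card_image_le[OF fin(1)] inj_on_iff_eq_card[OF fin(1)] by (metis le_antisym)
  have "card (parts D) \<le> card (\<alpha> ` parts D)"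
    using P card_image_le[OF finite_imageI[OF fin(2)]] by (rule order_trans)
  then show "inj_on \<alpha> (parts D)"
    using card_image_le[OF fin(2)] inj_on_iff_eq_card[OF fin(2)] by (metis le_antisym)
qed

lemma bij_reduction_card_le:
  assumes "is_asd D" "is_asd D'" "bij_betw \<phi> (states D) (states D')" "reduction \<phi> \<alpha> D D'"
    and "\<pi> \<in> parts D"
  shows "card \<pi> \<le> card (\<alpha> \<pi>)"
    and "card \<pi> = card (\<alpha> \<pi>) \<Longrightarrow> pullback (states D) \<phi> (\<alpha> \<pi>) = \<pi>"
proof -
  have fin: "finite (states D)" and \<pi>: "partition_on (states D) \<pi>"
    using assms(1,5) unfolding is_asd_def by blast+
  have \<alpha>\<pi>: "partition_on (states D') (\<alpha> \<pi>)"
    using assms(2,4,5) unfolding is_asd_def reduction_def by blast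
  have pb: "partition_on (states D) (pullback (states D) \<phi> (\<alpha> \<pi>))"
    using \<alpha>\<pi> assms(4) unfolding reduction_def by (blast intro: partition_on_pullback)
  have ref: "refines (pullback (states D) \<phi> (\<alpha> \<pi>)) \<pi>"
    using assms(4,5) unfolding reduction_def by blast
  have card_pb: "card (pullback (states D) \<phi> (\<alpha> \<pi>)) = card (\<alpha> \<pi>)"
    by (rule card_pullback_bij[OF assms(3) \<alpha>\<pi>])
  show "card \<pi> \<le> card (\<alpha> \<pi>)"
    using refines_card_le[OF fin pb \<pi> ref] card_pb by simp
  show "pullback (states D) \<phi> (\<alpha> \<pi>) = \<pi>" if "card \<pi> = card (\<alpha> \<pi>)"
    using refines_card_eq_imp_eq[OF fin pb \<pi> ref] card_pb that by simp
qed

lemma bij_reduction_sum_card_le: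
  assumes "is_asd D" "is_asd D'" "bij_betw \<phi> (states D) (states D')"
    "bij_betw \<alpha> (parts D) (parts D')" "reduction \<phi> \<alpha> D D'"
  shows "(\<Sum>\<pi>\<in>parts D. card \<pi>) \<le> (\<Sum>\<pi>'\<in>parts D'. card \<pi>')"
proof -
  have "(\<Sum>\<pi>\<in>parts D. card \<pi>) \<le> (\<Sum>\<pi>\<in>parts D. card (\<alpha> \<pi>))"
    using bij_reduction_card_le(1)[OF assms(1,2,3,5)] by (rule sum_mono)
  also have "\<dots> = (\<Sum>\<pi>'\<in>parts D'. card \<pi>')"
    using sum.reindex_bij_betw[OF assms(4)] .
  finally show ?thesis .
qed

lemma mutual_bij_reductions_imp_iso:
  assumes "is_asd D" "is_asd D'"
    and "bij_betw \<phi> (states D) (states D')" "bij_betw \<alpha> (parts D) (parts D')"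
    "reduction \<phi> \<alpha> D D'"
    and "bij_betw \<psi> (states D') (states D)" "bij_betw \<beta> (parts D') (parts D)"
    "reduction \<psi> \<beta> D' D"
  shows "asd_iso \<phi> \<alpha> D D'"
proof -
  have sum_eq: "(\<Sum>\<pi>\<in>parts D. card \<pi>) = (\<Sum>\<pi>\<in>parts D. card (\<alpha> \<pi>))"
    using bij_reduction_sum_card_le[OF assms(1-5)] bij_reduction_sum_card_le[OF assms(2,1,6-8)]
      sum.reindex_bij_betw[OF assms(4), of card] by linarith
  have "\<pi> = pullback (states D) \<phi> (\<alpha> \<pi>)" if \<pi>: "\<pi> \<in> parts D" for \<pi>
  proof -
    have "finite (parts D)"
      using assms(1) unfolding is_asd_def by blast
    then have "card \<pi> = card (\<alpha> \<pi>)"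
      using sum_mono_inv[OF sum_eq bij_reduction_card_le(1)[OF assms(1,2,3,5)] \<pi>] by blast
    then show ?thesis
      using bij_reduction_card_le(2)[OF assms(1,2,3,5) \<pi>] by simp
  qed
  with assms(3,4) show ?thesis
    unfolding asd_iso_def by blast
qed

lemma inj_on_inj_on_imp_bij_betw:
  assumes "finite A" "finite B" "inj_on f A" "f ` A \<subseteq> B" "inj_on g B" "g ` B \<subseteq> A"
  shows "bij_betw f A B"
proof -
  have "card (f ` A) = card B"
    using card_bij_eq[OF assms(3-6,1,2)] card_image[OF assms(3)] by simp
  then have "f ` A = B"
    using card_subset_eq[OF assms(2,4)] by blast
  with assms(3) show ?thesis
    unfolding bij_betw_def ..
qed

lemma minimal_mutual_reductions_bij:
  assumes "is_asd D" "is_asd D'" "asd_minimal D" "asd_minimal D'"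
    and "reduction \<phi> \<alpha> D D'" "reduction \<psi> \<beta> D' D"
  shows "bij_betw \<phi> (states D) (states D')" "bij_betw \<alpha> (parts D) (parts D')"
proof -
  have inj: "inj_on \<phi> (states D)" "inj_on \<alpha> (parts D)"
    using minimal_reduction_inj[OF assms(1,2,3,5)] assms(6) unfolding asd_le_iff_reduction by blast+
  have inj': "inj_on \<psi> (states D')" "inj_on \<beta> (parts D')"
    using minimal_reduction_inj[OF assms(2,1,4,6)] assms(5) unfolding asd_le_iff_reduction by blast+
  have fin: "finite (states D)" "finite (parts D)" "finite (states D')" "finite (parts D')"
    using assms(1,2) unfolding is_asd_def by blast+
  have img: "\<phi> ` states D \<subseteq> states D'" "\<alpha> ` parts D \<subseteq> parts D'"
    and img': "\<psi> ` states D' \<subseteq> states D" "\<beta> ` parts D' \<subseteq> parts D"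
    using assms(5,6) unfolding reduction_def by simp_all
  show "bij_betw \<phi> (states D) (states D')"
    by (rule inj_on_inj_on_imp_bij_betw[OF fin(1,3) inj(1) img(1) inj'(1) img'(1)])
  show "bij_betw \<alpha> (parts D) (parts D')"
    by (rule inj_on_inj_on_imp_bij_betw[OF fin(2,4) inj(2) img(2) inj'(2) img'(2)])
qed

theorem proposition2:
  fixes D :: "'a asd" and D' :: "'b asd"
  assumes "is_asd D" and "is_asd D'"
    and "asd_minimal D" and "asd_minimal D'"
  shows "asd_equiv D D' \<longleftrightarrow>
    (\<exists>\<phi> \<alpha>. bij_betw \<phi> (states D) (states D') \<and> bij_betw \<alpha> (parts D) (parts D') \<and>
       (\<forall>\<pi>\<in>parts D. \<pi> = pullback (states D) \<phi> (\<alpha> \<pi>)))"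
  unfolding asd_iso_def[symmetric]
proof
  assume "asd_equiv D D'"
  then obtain \<phi> \<alpha> \<psi> \<beta> where r: "reduction \<phi> \<alpha> D D'" and r': "reduction \<psi> \<beta> D' D"
    unfolding asd_equiv_def asd_le_iff_reduction by blast
  note bij = minimal_mutual_reductions_bij[OF assms r r']
    and bij' = minimal_mutual_reductions_bij[OF assms(2,1,4,3) r' r]
  have "asd_iso \<phi> \<alpha> D D'"
    by (rule mutual_bij_reductions_imp_iso[OF assms(1,2) bij r bij' r'])
  then show "\<exists>\<phi> \<alpha>. asd_iso \<phi> \<alpha> D D'" by blast
next
  assume "\<exists>\<phi> \<alpha>. asd_iso \<phi> \<alpha> D D'"
  then show "asd_equiv D D'"
    using asd_iso_imp_equiv by blast
qed

end
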